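(* Let $S'$ be a finite poset that has an induced sub-poset isomorphic to one of the posets $S_6,S_7,S_8$ below. Then there exists a stochastically monotone generator on $S'$ which is not realizably monotone. $S_6=\{a,b,c,d,e,f\}$ with strict relations exactly $a<b,a<c,a<d,a<e,a<f,b<e,c<e,c<f,d<f$. $S_7=\{a,b,c,d,e,f\}$ with strict relations exactly $a<d,a<f,b<e,b<f,c<d,c<e$. $S_8=\{a,b,c,d,e,f\}$ with strict relations exactly $a<e,a<f,b<d,b<e,b<f,c<d,c<e$. *)

theory Defs
  imports Complex_Main
begin

text \<open>Finite posets are modelled by a type of class finite and order (the poset is UNIV).
  A Markov generator (Q-matrix) on it is a real matrix with nonnegative off-diagonal
  entries and zero row sums.\<close>

definition generator :: "('a::finite \<Rightarrow> 'a \<Rightarrow> real) \<Rightarrow> bool" where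
  "generator Q \<longleftrightarrow> (\<forall>x y. x \<noteq> y \<longrightarrow> Q x y \<ge> 0) \<and> (\<forall>x. (\<Sum>y\<in>UNIV. Q x y) = 0)"

definition up_set :: "('a::order) set \<Rightarrow> bool" where
  "up_set U \<longleftrightarrow> (\<forall>x y. x \<in> U \<and> x \<le> y \<longrightarrow> y \<in> U)"

text \<open>Stochastic monotonicity of a generator (Massey's condition): for x \<le> y and every
  up-set U containing both or neither of x, y, the rate into U from x is at most that from y.\<close>

definition stoch_mono_gen :: "('a::{finite,order} \<Rightarrow> 'a \<Rightarrow> real) \<Rightarrow> bool" where
  "stoch_mono_gen Q \<longleftrightarrow> generator Q \<and>
     (\<forall>x y U. x \<le> y \<and> up_set U \<and> (x \<in> U \<longleftrightarrow> y \<in> U) \<longrightarrow>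
        (\<Sum>z\<in>U. Q x z) \<le> (\<Sum>z\<in>U. Q y z))"

definition realizably_mono_gen :: "('a::{finite,order} \<Rightarrow> 'a \<Rightarrow> real) \<Rightarrow> bool" where
  "realizably_mono_gen Q \<longleftrightarrow> generator Q \<and>
     (\<exists>w :: ('a \<Rightarrow> 'a) \<Rightarrow> real.
        (\<forall>f. w f \<ge> 0) \<and> (\<forall>f. \<not> mono f \<longrightarrow> w f = 0) \<and>
        (\<forall>x y. x \<noteq> y \<longrightarrow> Q x y = (\<Sum>f\<in>UNIV. w f * (if f x = y then 1 else 0))))"

text \<open>The six-element posets S6, S7, S8 on labels a..f = 0..5 (given by strict relations).\<close>

definition S6_less :: "(nat \<times> nat) set" where
  "S6_less = {(0,1),(0,2),(0,3),(0,4),(0,5),(1,4),(2,4),(2,5),(3,5)}"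

definition S7_less :: "(nat \<times> nat) set" where
  "S7_less = {(0,3),(0,5),(1,4),(1,5),(2,3),(2,4)}"

definition S8_less :: "(nat \<times> nat) set" where
  "S8_less = {(0,4),(0,5),(1,3),(1,4),(1,5),(2,3),(2,4)}"

definition has_induced_subposet :: "(nat \<times> nat) set \<Rightarrow> 'a::order itself \<Rightarrow> bool" where
  "has_induced_subposet R _ \<longleftrightarrow>
     (\<exists>g :: nat \<Rightarrow> 'a. inj_on g {0..<6} \<and>
        (\<forall>i\<in>{0..<6}. \<forall>j\<in>{0..<6}. (g i \<le> g j \<longleftrightarrow> i = j \<or> (i, j) \<in> R)))"

end

(* Let L \<le> H and M \<not>\<le> H. Let every state x jump to H at rate 1 when x \<ge> L or x \<ge> M and to
   L at rate 1 otherwise, and let the points of the interval [L, H] jump to both L and H. A realizably monotone generator is a nonnegative mixture of the jump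
   indicators of monotone maps, and the maps carrying positive weight only make jumps of positive
   rate; hence every linear inequality between off-diagonal rates that holds for the indicators
   of all such maps holds for the generator too. In a copy of S7 take L = c, H = e, M = f: a
   monotone map sending c to e (or e to c) is forced, through d and a (through b), to send f to
   e, and it cannot do both, while Q(c,e) + Q(e,c) = 2 > 1 = Q(f,e). *)

theory Submission
  imports Defs
begin

definition two_target_gen ::
    "'a \<Rightarrow> 'a \<Rightarrow> ('a \<Rightarrow> real) \<Rightarrow> ('a \<Rightarrow> real) \<Rightarrow> 'a \<Rightarrow> 'a \<Rightarrow> real" where
  "two_target_gen L H p q x z =
     p x * (of_bool (z = L) - of_bool (z = x)) + q x * (of_bool (z = H) - of_bool (z = x))"

lemma sum_two_target_gen:
  assumes "finite U"
  shows "(\<Sum>z\<in>U. two_target_gen L H p q x z) =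
    p x * (of_bool (L \<in> U) - of_bool (x \<in> U)) +
    q x * (of_bool (H \<in> U) - of_bool (x \<in> U))"
  using assms by (simp add: two_target_gen_def sum.distrib sum_subtractf flip: sum_distrib_left)

lemma two_target_gen_off_diag:
  assumes "x \<noteq> z" "L \<noteq> H"
  shows "two_target_gen L H p q x z = (if z = L then p x else if z = H then q x else 0)"
  using assms by (auto simp: two_target_gen_def)

lemma generator_two_target_gen:
  assumes "\<And>x. p x \<ge> 0" "\<And>x. q x \<ge> 0"
  shows "generator (two_target_gen L H p q :: 'a::finite \<Rightarrow> _)"
  using assms unfolding generator_def
  by (auto simp: sum_two_target_gen) (auto simp: two_target_gen_def)

lemma stoch_mono_two_target_gen:
  fixes L H :: "'a::{finite,order}"
  assumes "L \<le> H" and nonneg: "\<And>x. p x \<ge> 0" "\<And>x. q x \<ge> 0"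
    and "antimono p" "mono q"
    and total_off_interval:
      "\<And>x y. x \<notin> {L..H} \<Longrightarrow> y \<notin> {L..H} \<Longrightarrow> p x + q x = p y + q y"
  shows "stoch_mono_gen (two_target_gen L H p q)"
  unfolding stoch_mono_gen_def
proof (intro conjI allI impI)
  show "generator (two_target_gen L H p q)"
    using nonneg by (rule generator_two_target_gen)
  fix x y :: 'a and U :: "'a set"
  assume "x \<le> y \<and> up_set U \<and> (x \<in> U \<longleftrightarrow> y \<in> U)"
  then have "x \<le> y" and xy: "x \<in> U \<longleftrightarrow> y \<in> U"
    and up: "\<And>u v. u \<in> U \<Longrightarrow> u \<le> v \<Longrightarrow> v \<in> U"
    unfolding up_set_def by blast+
  have "p y \<le> p x" "q x \<le> q y"
    using \<open>antimono p\<close> \<open>mono q\<close> \<open>x \<le> y\<close> by (auto dest: monoD antimonoD)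
  moreover have "L \<in> U \<Longrightarrow> H \<in> U"
    using up \<open>L \<le> H\<close> by blast
  moreover have "p x + q x = p y + q y" if "x \<in> U" "H \<notin> U"
    using total_off_interval up that xy by (meson atLeastAtMost_iff)
  moreover have "p x + q x = p y + q y" if "y \<notin> U" "L \<in> U"
    using total_off_interval up that xy \<open>x \<le> y\<close> by (meson atLeastAtMost_iff order_trans)
  ultimately show "(\<Sum>z\<in>U. two_target_gen L H p q x z) \<le> (\<Sum>z\<in>U. two_target_gen L H p q y z)"
    using xy by (cases "x \<in> U"; cases "L \<in> U"; cases "H \<in> U") (auto simp: sum_two_target_gen)
qed

definition witness_gen :: "'a::order \<Rightarrow> 'a \<Rightarrow> 'a \<Rightarrow> 'a \<Rightarrow> 'a \<Rightarrow> real" where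
  "witness_gen L H M = two_target_gen L H
     (\<lambda>x. of_bool (x \<in> {L..H} \<or> \<not> (L \<le> x \<or> M \<le> x)))
     (\<lambda>x. of_bool (L \<le> x \<or> M \<le> x))"

lemma stoch_mono_witness_gen:
  fixes L H M :: "'a::{finite,order}"
  assumes "L \<le> H" "\<not> M \<le> H"
  shows "stoch_mono_gen (witness_gen L H M)"
  unfolding witness_gen_def
proof (rule stoch_mono_two_target_gen)
  show "antimono (\<lambda>x. of_bool (x \<in> {L..H} \<or> \<not> (L \<le> x \<or> M \<le> x)) :: real)"
    using assms by (intro antimonoI) (auto intro: order_trans)
  show "mono (\<lambda>x. of_bool (L \<le> x \<or> M \<le> x) :: real)"
    by (intro monoI) (auto intro: order_trans)
qed (use assms in simp_all)

lemma witness_gen_off_diag: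
  assumes "x \<noteq> z" "L \<noteq> H"
  shows "witness_gen L H M x z =
    (if z = L then of_bool (x \<in> {L..H} \<or> \<not> (L \<le> x \<or> M \<le> x))
     else if z = H then of_bool (L \<le> x \<or> M \<le> x) else 0)"
  using assms by (simp add: witness_gen_def two_target_gen_off_diag)

lemma witness_gen_supported_map:
  assumes "L \<noteq> H" and "\<phi> x \<noteq> x \<Longrightarrow> witness_gen L H M x (\<phi> x) \<noteq> 0"
  shows "\<phi> x = x \<or> \<phi> x = L \<and> (x \<in> {L..H} \<or> \<not> (L \<le> x \<or> M \<le> x))
    \<or> \<phi> x = H \<and> (L \<le> x \<or> M \<le> x)"
  using assms by (auto simp: witness_gen_off_diag split: if_splits)

lemma realizably_mono_gen_rate_le:
  fixes Q :: "'a::{finite,order} \<Rightarrow> 'a \<Rightarrow> real"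
  assumes "realizably_mono_gen Q"
    and off_diag: "\<forall>(x, y) \<in> set (ps @ ns). x \<noteq> y"
    and maps_le: "\<And>\<phi>. mono \<phi> \<Longrightarrow> (\<And>x. \<phi> x \<noteq> x \<Longrightarrow> Q x (\<phi> x) \<noteq> 0) \<Longrightarrow>
        (\<Sum>(x, y) \<leftarrow> ps. of_bool (\<phi> x = y))
          \<le> (\<Sum>(x, y) \<leftarrow> ns. of_bool (\<phi> x = y) :: real)"
  shows "(\<Sum>(x, y) \<leftarrow> ps. Q x y) \<le> (\<Sum>(x, y) \<leftarrow> ns. Q x y)"
proof -
  obtain w :: "('a \<Rightarrow> 'a) \<Rightarrow> real"
    where w_nonneg: "\<And>\<phi>. w \<phi> \<ge> 0"
    and w_mono: "\<And>\<phi>. \<not> mono \<phi> \<Longrightarrow> w \<phi> = 0"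
    and Q_eq: "\<And>x y. x \<noteq> y \<Longrightarrow> Q x y = (\<Sum>\<phi>\<in>UNIV. w \<phi> * of_bool (\<phi> x = y))"
    using assms(1) unfolding realizably_mono_gen_def of_bool_def by blast
  have sum_Q: "(\<Sum>(x, y) \<leftarrow> xs. Q x y) =
      (\<Sum>\<phi>\<in>UNIV. w \<phi> * (\<Sum>(x, y) \<leftarrow> xs. of_bool (\<phi> x = y)))"
    if "\<forall>(x, y) \<in> set xs. x \<noteq> y" for xs
    using that by (induction xs) (auto simp: Q_eq sum.distrib distrib_left)
  have "w \<phi> * (\<Sum>(x, y) \<leftarrow> ps. of_bool (\<phi> x = y)) \<le>
      w \<phi> * (\<Sum>(x, y) \<leftarrow> ns. of_bool (\<phi> x = y))" for \<phi>
  proof (cases "w \<phi> = 0")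
    case False
    have "Q x (\<phi> x) \<noteq> 0" if "\<phi> x \<noteq> x" for x
    proof -
      have "w \<phi> \<le> (\<Sum>\<psi>\<in>UNIV. w \<psi> * of_bool (\<psi> x = \<phi> x))"
        using member_le_sum[of \<phi> UNIV "\<lambda>\<psi>. w \<psi> * of_bool (\<psi> x = \<phi> x)"] w_nonneg by auto
      then show ?thesis
        using Q_eq[of x "\<phi> x"] that False w_nonneg[of \<phi>] by auto
    qed
    with False w_mono maps_le show ?thesis
      by (metis mult_left_mono w_nonneg)
  qed simp
  then show ?thesis
    using off_diag by (simp add: sum_Q sum_mono)
qed

lemma induced_subposetE:
  assumes "has_induced_subposet R TYPE('a)"
  obtains g :: "nat \<Rightarrow> 'a::order" where
    "\<And>i j. i < 6 \<Longrightarrow> j < 6 \<Longrightarrow> g i \<le> g j \<longleftrightarrow> i = j \<or> (i, j) \<in> R"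
    "\<And>i j. i < 6 \<Longrightarrow> j < 6 \<Longrightarrow> g i = g j \<longleftrightarrow> i = j"
proof -
  obtain g :: "nat \<Rightarrow> 'a" where "inj_on g {0..<6}"
    and "\<forall>i\<in>{0..<6}. \<forall>j\<in>{0..<6}. g i \<le> g j \<longleftrightarrow> i = j \<or> (i, j) \<in> R"
    using assms unfolding has_induced_subposet_def by blast
  then show thesis
    by (intro that[of g]) (simp_all add: inj_on_eq_iff)
qed

lemma stoch_mono_not_realizable_S6:
  assumes "has_induced_subposet S6_less TYPE('a::{finite,order})"
  shows "\<exists>Q :: 'a \<Rightarrow> 'a \<Rightarrow> real. stoch_mono_gen Q \<and> \<not> realizably_mono_gen Q"
proof -
  obtain g :: "nat \<Rightarrow> 'a"
    where le: "\<And>i j. i < 6 \<Longrightarrow> j < 6 \<Longrightarrow> g i \<le> g j \<longleftrightarrow> i = j \<or> (i, j) \<in> S6_less"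
    and eq: "\<And>i j. i < 6 \<Longrightarrow> j < 6 \<Longrightarrow> g i = g j \<longleftrightarrow> i = j"
    using induced_subposetE[OF assms] by blast
  note rel = le eq S6_less_def
  let ?a = "g 0" and ?b = "g 1" and ?c = "g 2" and ?d = "g 3" and ?e = "g 4" and ?f = "g 5"
  define Q where "Q = witness_gen ?c ?e ?d"
  have "stoch_mono_gen Q"
    unfolding Q_def by (rule stoch_mono_witness_gen) (simp_all add: rel)
  moreover have "\<not> realizably_mono_gen Q"
  proof
    assume "realizably_mono_gen Q"
    then have "(\<Sum>(x, y) \<leftarrow> [(?a, ?c), (?e, ?c), (?c, ?e)]. Q x y)
      \<le> (\<Sum>(x, y) \<leftarrow> [(?b, ?c), (?f, ?e)]. Q x y)"
    proof (rule realizably_mono_gen_rate_le)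
      fix \<phi> :: "'a \<Rightarrow> 'a"
      assume mono: "mono \<phi>" and supp: "\<And>x. \<phi> x \<noteq> x \<Longrightarrow> Q x (\<phi> x) \<noteq> 0"
      have jump: "\<phi> x = x \<or> \<phi> x = ?c \<and> (x \<in> {?c..?e} \<or> \<not> (?c \<le> x \<or> ?d \<le> x))
        \<or> \<phi> x = ?e \<and> (?c \<le> x \<or> ?d \<le> x)" for x
        by (rule witness_gen_supported_map[OF _ supp[unfolded Q_def]]) (simp add: rel)
      note up = monoD[OF mono]
      have "\<phi> ?a = ?c \<Longrightarrow> \<phi> ?b = ?c" using jump[of ?b] up[of ?a ?b] by (auto simp: rel)
      moreover have "\<phi> ?a = ?c \<Longrightarrow> \<phi> ?d = ?e" using jump[of ?d] up[of ?a ?d] by (auto simp: rel)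
      moreover have "\<phi> ?d = ?e \<Longrightarrow> \<phi> ?f = ?e" using jump[of ?f] up[of ?d ?f] by (auto simp: rel)
      moreover have "\<phi> ?e = ?c \<Longrightarrow> \<phi> ?b = ?c" using jump[of ?b] up[of ?b ?e] by (auto simp: rel)
      moreover have "\<phi> ?c = ?e \<Longrightarrow> \<phi> ?f = ?e" using jump[of ?f] up[of ?c ?f] by (auto simp: rel)
      moreover have "\<phi> ?c = ?e \<Longrightarrow> \<phi> ?e \<noteq> ?c" using up[of ?c ?e] by (auto simp: rel)
      ultimately show "(\<Sum>(x, y) \<leftarrow> [(?a, ?c), (?e, ?c), (?c, ?e)]. of_bool (\<phi> x = y))
          \<le> (\<Sum>(x, y) \<leftarrow> [(?b, ?c), (?f, ?e)]. of_bool (\<phi> x = y) :: real)"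
        by auto
    qed (simp add: rel)
    moreover have "Q ?a ?c = 1" "Q ?e ?c = 1" "Q ?c ?e = 1" "Q ?b ?c = 1" "Q ?f ?e = 1"
      by (simp_all add: Q_def witness_gen_off_diag rel)
    ultimately show False by simp
  qed
  ultimately show ?thesis by blast
qed

lemma stoch_mono_not_realizable_S7:
  assumes "has_induced_subposet S7_less TYPE('a::{finite,order})"
  shows "\<exists>Q :: 'a \<Rightarrow> 'a \<Rightarrow> real. stoch_mono_gen Q \<and> \<not> realizably_mono_gen Q"
proof -
  obtain g :: "nat \<Rightarrow> 'a"
    where le: "\<And>i j. i < 6 \<Longrightarrow> j < 6 \<Longrightarrow> g i \<le> g j \<longleftrightarrow> i = j \<or> (i, j) \<in> S7_less"
    and eq: "\<And>i j. i < 6 \<Longrightarrow> j < 6 \<Longrightarrow> g i = g j \<longleftrightarrow> i = j"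
    using induced_subposetE[OF assms] by blast
  note rel = le eq S7_less_def
  let ?a = "g 0" and ?b = "g 1" and ?c = "g 2" and ?d = "g 3" and ?e = "g 4" and ?f = "g 5"
  define Q where "Q = witness_gen ?c ?e ?f"
  have "stoch_mono_gen Q"
    unfolding Q_def by (rule stoch_mono_witness_gen) (simp_all add: rel)
  moreover have "\<not> realizably_mono_gen Q"
  proof
    assume "realizably_mono_gen Q"
    then have "(\<Sum>(x, y) \<leftarrow> [(?c, ?e), (?e, ?c)]. Q x y)
      \<le> (\<Sum>(x, y) \<leftarrow> [(?f, ?e)]. Q x y)"
    proof (rule realizably_mono_gen_rate_le)
      fix \<phi> :: "'a \<Rightarrow> 'a"
      assume mono: "mono \<phi>" and supp: "\<And>x. \<phi> x \<noteq> x \<Longrightarrow> Q x (\<phi> x) \<noteq> 0"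
      have jump: "\<phi> x = x \<or> \<phi> x = ?c \<and> (x \<in> {?c..?e} \<or> \<not> (?c \<le> x \<or> ?f \<le> x))
        \<or> \<phi> x = ?e \<and> (?c \<le> x \<or> ?f \<le> x)" for x
        by (rule witness_gen_supported_map[OF _ supp[unfolded Q_def]]) (simp add: rel)
      note up = monoD[OF mono]
      have "\<phi> ?c = ?e \<Longrightarrow> \<phi> ?d = ?e" using jump[of ?d] up[of ?c ?d] by (auto simp: rel)
      moreover have "\<phi> ?d = ?e \<Longrightarrow> \<phi> ?a = ?c" using jump[of ?a] up[of ?a ?d] by (auto simp: rel)
      moreover have "\<phi> ?a = ?c \<Longrightarrow> \<phi> ?f = ?e" using jump[of ?f] up[of ?a ?f] by (auto simp: rel)
      moreover have "\<phi> ?e = ?c \<Longrightarrow> \<phi> ?b = ?c" using jump[of ?b] up[of ?b ?e] by (auto simp: rel)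
      moreover have "\<phi> ?b = ?c \<Longrightarrow> \<phi> ?f = ?e" using jump[of ?f] up[of ?b ?f] by (auto simp: rel)
      moreover have "\<phi> ?c = ?e \<Longrightarrow> \<phi> ?e \<noteq> ?c" using up[of ?c ?e] by (auto simp: rel)
      ultimately show "(\<Sum>(x, y) \<leftarrow> [(?c, ?e), (?e, ?c)]. of_bool (\<phi> x = y))
          \<le> (\<Sum>(x, y) \<leftarrow> [(?f, ?e)]. of_bool (\<phi> x = y) :: real)"
        by auto
    qed (simp add: rel)
    moreover have "Q ?c ?e = 1" "Q ?e ?c = 1" "Q ?f ?e = 1"
      by (simp_all add: Q_def witness_gen_off_diag rel)
    ultimately show False by simp
  qed
  ultimately show ?thesis by blast
qed

lemma stoch_mono_not_realizable_S8:
  assumes "has_induced_subposet S8_less TYPE('a::{finite,order})"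
  shows "\<exists>Q :: 'a \<Rightarrow> 'a \<Rightarrow> real. stoch_mono_gen Q \<and> \<not> realizably_mono_gen Q"
proof -
  obtain g :: "nat \<Rightarrow> 'a"
    where le: "\<And>i j. i < 6 \<Longrightarrow> j < 6 \<Longrightarrow> g i \<le> g j \<longleftrightarrow> i = j \<or> (i, j) \<in> S8_less"
    and eq: "\<And>i j. i < 6 \<Longrightarrow> j < 6 \<Longrightarrow> g i = g j \<longleftrightarrow> i = j"
    using induced_subposetE[OF assms] by blast
  note rel = le eq S8_less_def
  let ?a = "g 0" and ?b = "g 1" and ?c = "g 2" and ?d = "g 3" and ?e = "g 4" and ?f = "g 5"
  define Q where "Q = witness_gen ?c ?d ?e"
  have "stoch_mono_gen Q"
    unfolding Q_def by (rule stoch_mono_witness_gen) (simp_all add: rel)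
  moreover have "\<not> realizably_mono_gen Q"
  proof
    assume "realizably_mono_gen Q"
    then have "(\<Sum>(x, y) \<leftarrow> [(?c, ?d), (?d, ?c)]. Q x y)
      \<le> (\<Sum>(x, y) \<leftarrow> [(?f, ?c)]. Q x y)"
    proof (rule realizably_mono_gen_rate_le)
      fix \<phi> :: "'a \<Rightarrow> 'a"
      assume mono: "mono \<phi>" and supp: "\<And>x. \<phi> x \<noteq> x \<Longrightarrow> Q x (\<phi> x) \<noteq> 0"
      have jump: "\<phi> x = x \<or> \<phi> x = ?c \<and> (x \<in> {?c..?d} \<or> \<not> (?c \<le> x \<or> ?e \<le> x))
        \<or> \<phi> x = ?d \<and> (?c \<le> x \<or> ?e \<le> x)" for x
        by (rule witness_gen_supported_map[OF _ supp[unfolded Q_def]]) (simp add: rel)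
      note up = monoD[OF mono]
      have "\<phi> ?c = ?d \<Longrightarrow> \<phi> ?e = ?d" using jump[of ?e] up[of ?c ?e] by (auto simp: rel)
      moreover have "\<phi> ?e = ?d \<Longrightarrow> \<phi> ?a = ?c" using jump[of ?a] up[of ?a ?e] by (auto simp: rel)
      moreover have "\<phi> ?a = ?c \<Longrightarrow> \<phi> ?f = ?c" using jump[of ?f] up[of ?a ?f] by (auto simp: rel)
      moreover have "\<phi> ?d = ?c \<Longrightarrow> \<phi> ?b = ?c" using jump[of ?b] up[of ?b ?d] by (auto simp: rel)
      moreover have "\<phi> ?b = ?c \<Longrightarrow> \<phi> ?f = ?c" using jump[of ?f] up[of ?b ?f] by (auto simp: rel)
      moreover have "\<phi> ?c = ?d \<Longrightarrow> \<phi> ?d \<noteq> ?c" using up[of ?c ?d] by (auto simp: rel)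
      ultimately show "(\<Sum>(x, y) \<leftarrow> [(?c, ?d), (?d, ?c)]. of_bool (\<phi> x = y))
          \<le> (\<Sum>(x, y) \<leftarrow> [(?f, ?c)]. of_bool (\<phi> x = y) :: real)"
        by auto
    qed (simp add: rel)
    moreover have "Q ?c ?d = 1" "Q ?d ?c = 1" "Q ?f ?c = 1"
      by (simp_all add: Q_def witness_gen_off_diag rel)
    ultimately show False by simp
  qed
  ultimately show ?thesis by blast
qed

theorem proposition4p3:
  assumes "has_induced_subposet S6_less TYPE('a::{finite,order})
         \<or> has_induced_subposet S7_less TYPE('a)
         \<or> has_induced_subposet S8_less TYPE('a)"
  shows "\<exists>Q :: 'a \<Rightarrow> 'a \<Rightarrow> real. stoch_mono_gen Q \<and> \<not> realizably_mono_gen Q"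
  using assms stoch_mono_not_realizable_S6 stoch_mono_not_realizable_S7
    stoch_mono_not_realizable_S8 by blast

end
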